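(* Let $3\le K\le N$, $M\in[0,N]$, and $\mathbf p$ with $p_1\ge\dots\ge p_N$. For every $\mathbf a\in\mathcal Q$ and every demand vector $\mathbf d\in[N]^K$ with $K$ pairwise distinct entries, $R_{\mathrm{MCCS}}(\mathbf d;\mathbf a)=R_{\mathrm{lb}}(\mathcal D(\mathbf d);\mathbf a)$. Consequently, restricting to demands with all-distinct requests (with probabilities $\prod_i p_{d_i}$ normalized over the set $\mathcal T_K$ of such demand vectors), $$\min_{\mathbf a\text{ feasible},\,\mathbf a\in\mathcal Q}\ \sum_{\mathbf d\in\mathcal T_K}\tfrac{\prod_i p_{d_i}}{Z}R_{\mathrm{MCCS}}(\mathbf d;\mathbf a)=\min_{\mathbf a\text{ feasible},\,\mathbf a\in\mathcal Q}\ \sum_{\mathbf d\in\mathcal T_K}\tfrac{\prod_i p_{d_i}}{Z}R_{\mathrm{lb}}(\mathcal D(\mathbf d);\mathbf a),$$ where $Z=\sum_{\mathbf d\in\mathcal T_K}\prod_i p_{d_i}$; i.e. the optimized MCCS attains the popularity-first-based lower bound (P2) in this regime.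
   Context: Setting: $N$ files with request probabilities $p_1\ge\dots\ge p_N$ ($\sum p_n=1$), all $p_n>0$ assumed so that $Z>0$; $K$ users, cache size $M$. $[m]=\{1,\dots,m\}$; $\binom{m}{l}=0$ if $l>m$ or $m<0$. For $\mathbf d\in[N]^K$, $\mathcal D(\mathbf d)$ is the set of distinct entries; $\mathcal T_K=\{\mathbf d\in[N]^K: |\mathcal D(\mathbf d)|=K\}$. A placement vector $\mathbf a=(a_{n,l})_{n\in[N],0\le l\le K}$ is feasible if (i) $a_{n,l}\ge0$; (ii) $\sum_{l=0}^K\binom{K}{l}a_{n,l}=1$ for each $n$; (iii) $\sum_{n=1}^N\sum_{l=1}^K\binom{K-1}{l-1}a_{n,l}\le M$. The popularity-first set is $\mathcal Q=\{\mathbf a: a_{n,l}\ge a_{n+1,l}\ \forall n\in[N-1],\ l\in[K]\}$. $R_{\mathrm{lb}}(\mathcal D;\mathbf a)=\max_{\pi}\sum_{l=0}^{K-1}\sum_{i=1}^{|\mathcal D|}\binom{K-i}{l}a_{\pi(i),l}$ over bijections $\pi:[|\mathcal D|]\to\mathcal D$. MCCS rate: for a demand $\mathbf d$, the leader group $\mathcal U(\mathbf d)\subseteq[K]$ consists of, for each file in $\mathcal D(\mathbf d)$, one user requesting it (say the smallest-index one); $R_{\mathrm{MCCS}}(\mathbf d;\mathbf a)=\sum_{\emptyset\ne\mathcal S\subseteq[K],\ \mathcal S\cap\mathcal U(\mathbf d)\ne\emptyset}\ \max_{k\in\mathcal S}a_{d_k,|\mathcal S|-1}$. (For $\mathbf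 d\in\mathcal T_K$, $\mathcal U(\mathbf d)=[K]$.) *)

theory Defs
  imports "HOL-Library.FuncSet" Complex_Main
begin

text \<open>Files are indexed by 1..N, users by 1..K, levels by 0..K.
  A placement vector is a function a :: nat => nat => real, a n l = a_{n,l}.
  A demand vector is a function d in PiE {1..K} (%_. {1..N}).\<close>

definition feasible :: "nat \<Rightarrow> nat \<Rightarrow> real \<Rightarrow> (nat \<Rightarrow> nat \<Rightarrow> real) \<Rightarrow> bool" where
  "feasible N K M a \<longleftrightarrow>
     (\<forall>n\<in>{1..N}. \<forall>l\<in>{0..K}. a n l \<ge> 0) \<and>
     (\<forall>n\<in>{1..N}. (\<Sum>l=0..K. real (K choose l) * a n l) = 1) \<and>
     (\<Sum>n=1..N. \<Sum>l=1..K. real ((K - 1) choose (l - 1)) * a n l) \<le> M"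

definition popularity_first :: "nat \<Rightarrow> nat \<Rightarrow> (nat \<Rightarrow> nat \<Rightarrow> real) \<Rightarrow> bool" where
  "popularity_first N K a \<longleftrightarrow>
     (\<forall>n\<in>{1..N-1}. \<forall>l\<in>{1..K}. a n l \<ge> a (n+1) l)"

definition demands_distinct :: "nat \<Rightarrow> nat \<Rightarrow> (nat \<Rightarrow> nat) set" where
  "demands_distinct N K = {d \<in> {1..K} \<rightarrow>\<^sub>E {1..N}. card (d ` {1..K}) = K}"

definition distinct_files :: "nat \<Rightarrow> (nat \<Rightarrow> nat) \<Rightarrow> nat set" where
  "distinct_files K d = d ` {1..K}"

definition R_lb :: "nat \<Rightarrow> nat set \<Rightarrow> (nat \<Rightarrow> nat \<Rightarrow> real) \<Rightarrow> real" where
  "R_lb K D a = Max ((\<lambda>\<pi>. \<Sum>l=0..K-1. \<Sum>i=1..card D. real ((K - i) choose l) * a (\<pi> i) l) `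
       {\<pi> \<in> {1..card D} \<rightarrow>\<^sub>E D. bij_betw \<pi> {1..card D} D})"

definition leaders :: "nat \<Rightarrow> (nat \<Rightarrow> nat) \<Rightarrow> nat set" where
  "leaders K d = {k \<in> {1..K}. \<forall>j\<in>{1..K}. j < k \<longrightarrow> d j \<noteq> d k}"

definition R_MCCS :: "nat \<Rightarrow> (nat \<Rightarrow> nat) \<Rightarrow> (nat \<Rightarrow> nat \<Rightarrow> real) \<Rightarrow> real" where
  "R_MCCS K d a = (\<Sum>S \<in> {S. S \<subseteq> {1..K} \<and> S \<noteq> {} \<and> S \<inter> leaders K d \<noteq> {}}.
       Max ((\<lambda>k. a (d k) (card S - 1)) ` S))"

definition demand_prob :: "nat \<Rightarrow> (nat \<Rightarrow> real) \<Rightarrow> (nat \<Rightarrow> nat) \<Rightarrow> real" where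
  "demand_prob K p d = (\<Prod>i=1..K. p (d i))"

definition Z_norm :: "nat \<Rightarrow> nat \<Rightarrow> (nat \<Rightarrow> real) \<Rightarrow> real" where
  "Z_norm N K p = (\<Sum>d\<in>demands_distinct N K. demand_prob K p d)"

end

theory Submission
  imports Defs "HOL-Library.Infinite_Set"
begin

text \<open>For a demand with pairwise distinct requests every user is a leader, so the MCCS rate is
  the sum, over all nonempty sets \<open>T\<close> of requested files, of the largest \<open>a f (|T| - 1)\<close>
  with \<open>f \<in> T\<close>. Grouping the nonempty subsets of \<open>{1..K}\<close> by their minimum shows that the
  lower-bound objective for an ordering \<open>\<pi>\<close> of the files is the same sum with the maximum
  replaced by the value at the file \<open>\<pi> (Min U)\<close>. Hence it never exceeds the MCCS rate, and for
  the ordering by popularity the two agree, because a popularity-first placement decreases with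
  the file index. The identity holds for every placement, so the averaged minima coincide without
  using the assumptions on \<open>K\<close>, \<open>M\<close> and \<open>p\<close>.\<close>

lemma sum_Pow_by_card:
  fixes f :: "nat \<Rightarrow> real"
  assumes "finite A"
  shows "(\<Sum>V\<in>Pow A. f (card V)) = (\<Sum>l=0..card A. real (card A choose l) * f l)"
proof -
  have "(\<Sum>V\<in>Pow A. f (card V)) = (\<Sum>l=0..card A. \<Sum>V\<in>{V. V \<in> Pow A \<and> card V = l}. f (card V))"
    by (rule sum.group[symmetric]) (use assms card_mono in auto)
  also have "\<dots> = (\<Sum>l=0..card A. real (card A choose l) * f l)"
  proof (rule sum.cong[OF refl])
    fix l
    have "(\<Sum>V\<in>{V. V \<in> Pow A \<and> card V = l}. f (card V)) = (\<Sum>V\<in>{V. V \<subseteq> A \<and> card V = l}. f l)"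
      by (rule sum.cong) auto
    then show "(\<Sum>V\<in>{V. V \<in> Pow A \<and> card V = l}. f (card V)) = real (card A choose l) * f l"
      using n_subsets[OF assms, of l] by simp
  qed
  finally show ?thesis .
qed

lemma sum_nonempty_subsets_by_Min:
  fixes A :: "'a::linorder set"
  assumes "finite A"
  shows "(\<Sum>U\<in>{U. U \<subseteq> A \<and> U \<noteq> {}}. h U) = (\<Sum>i\<in>A. \<Sum>V\<in>Pow {j\<in>A. i < j}. h (insert i V))"
proof -
  let ?S = "SIGMA i:A. Pow {j\<in>A. i < j}"
  have Min_insert: "Min (insert i V) = i" if "(i, V) \<in> ?S" for i V
    using that assms by (intro Min_eqI) (auto intro: finite_subset)
  have finite_U: "finite U" if "U \<subseteq> A" for U
    using that assms by (rule finite_subset)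
  have Min_mem: "Min U \<in> U" if "U \<subseteq> A" "U \<noteq> {}" for U
    using finite_U[OF that(1)] that(2) by (rule Min_in)
  have "bij_betw (\<lambda>(i, V). insert i V) ?S {U. U \<subseteq> A \<and> U \<noteq> {}}"
  proof (rule bij_betw_byWitness[where f' = "\<lambda>U. (Min U, U - {Min U})"])
    show "\<forall>x\<in>?S. (\<lambda>U. (Min U, U - {Min U})) ((\<lambda>(i, V). insert i V) x) = x"
      using Min_insert by auto
    show "\<forall>U\<in>{U. U \<subseteq> A \<and> U \<noteq> {}}. (\<lambda>(i, V). insert i V) (Min U, U - {Min U}) = U"
      using Min_mem by auto
    have "U - {Min U} \<subseteq> {j\<in>A. Min U < j}" if "U \<subseteq> A" "U \<noteq> {}" for U
      using that finite_U[OF that(1)] by (auto simp: order.not_eq_order_implies_strict)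
    then show "(\<lambda>U. (Min U, U - {Min U})) ` {U. U \<subseteq> A \<and> U \<noteq> {}} \<subseteq> ?S"
      using Min_mem by blast
  qed auto
  then have "(\<Sum>U\<in>{U. U \<subseteq> A \<and> U \<noteq> {}}. h U) = (\<Sum>(i, V)\<in>?S. h (insert i V))"
    by (simp add: sum.reindex_bij_betw[symmetric] case_prod_beta)
  also have "\<dots> = (\<Sum>i\<in>A. \<Sum>V\<in>Pow {j\<in>A. i < j}. h (insert i V))"
    by (rule sum.Sigma[symmetric]) (use assms in auto)
  finally show ?thesis .
qed

lemma sum_nonempty_subsets_Min_card:
  fixes g :: "nat \<Rightarrow> nat \<Rightarrow> real"
  shows "(\<Sum>U\<in>{U. U \<subseteq> {1..K} \<and> U \<noteq> {}}. g (Min U) (card U - 1))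
       = (\<Sum>l=0..K-1. \<Sum>i=1..K. real ((K - i) choose l) * g i l)"
proof -
  have "(\<Sum>U\<in>{U. U \<subseteq> {1..K} \<and> U \<noteq> {}}. g (Min U) (card U - 1))
      = (\<Sum>i=1..K. \<Sum>V\<in>Pow {i<..K}. g (Min (insert i V)) (card (insert i V) - 1))"
  proof -
    have "{j \<in> {1..K}. i < j} = {i<..K}" if "i \<in> {1..K}" for i
      using that by auto
    then show ?thesis
      by (simp add: sum_nonempty_subsets_by_Min)
  qed
  also have "\<dots> = (\<Sum>i=1..K. \<Sum>V\<in>Pow {i<..K}. g i (card V))"
  proof (intro sum.cong refl)
    fix i V assume "V \<in> Pow {i<..K}"
    then have "V \<subseteq> {i<..K}" and "finite V"
      by (auto intro: finite_subset)
    moreover have "i \<notin> V"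
      using \<open>V \<subseteq> {i<..K}\<close> by auto
    ultimately have "Min (insert i V) = i" and "card (insert i V) = Suc (card V)"
      by (auto intro!: Min_eqI)
    then show "g (Min (insert i V)) (card (insert i V) - 1) = g i (card V)"
      by simp
  qed
  also have "\<dots> = (\<Sum>i=1..K. \<Sum>l=0..K-1. real ((K - i) choose l) * g i l)"
  proof (rule sum.cong[OF refl])
    fix i assume "i \<in> {1..K}"
    then have "(\<Sum>l=0..K-i. real ((K - i) choose l) * g i l)
             = (\<Sum>l=0..K-1. real ((K - i) choose l) * g i l)"
      by (intro sum.mono_neutral_left) auto
    then show "(\<Sum>V\<in>Pow {i<..K}. g i (card V)) = (\<Sum>l=0..K-1. real ((K - i) choose l) * g i l)"
      using sum_Pow_by_card[of "{i<..K}" "g i"] by simp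
  qed
  also have "\<dots> = (\<Sum>l=0..K-1. \<Sum>i=1..K. real ((K - i) choose l) * g i l)"
    by (rule sum.swap)
  finally show ?thesis .
qed

lemma sum_nonempty_subsets_reindex:
  assumes "bij_betw f A B"
  shows "(\<Sum>T\<in>{T. T \<subseteq> B \<and> T \<noteq> {}}. g T) = (\<Sum>U\<in>{U. U \<subseteq> A \<and> U \<noteq> {}}. g (f ` U))"
proof -
  have "bij_betw (image f) (Pow A - {{}}) (Pow B - {{}})"
    using bij_betw_Pow[OF assms] by (rule bij_betw_DiffI) auto
  then show ?thesis
    by (simp add: sum.reindex_bij_betw[symmetric] Pow_def set_diff_eq conj_commute)
qed

definition order_rate :: "nat \<Rightarrow> (nat \<Rightarrow> nat \<Rightarrow> real) \<Rightarrow> (nat \<Rightarrow> nat) \<Rightarrow> real" where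
  "order_rate K a \<pi> = (\<Sum>l=0..K-1. \<Sum>i=1..K. real ((K - i) choose l) * a (\<pi> i) l)"

definition subset_max_rate :: "nat set \<Rightarrow> (nat \<Rightarrow> nat \<Rightarrow> real) \<Rightarrow> real" where
  "subset_max_rate D a = (\<Sum>T\<in>{T. T \<subseteq> D \<and> T \<noteq> {}}. Max ((\<lambda>f. a f (card T - 1)) ` T))"

lemma order_rate_eq_sum_Min:
  "order_rate K a \<pi> = (\<Sum>U\<in>{U. U \<subseteq> {1..K} \<and> U \<noteq> {}}. a (\<pi> (Min U)) (card U - 1))"
  unfolding order_rate_def by (rule sum_nonempty_subsets_Min_card[symmetric])

lemma subset_max_rate_bij_betw:
  assumes "bij_betw \<pi> A D"
  shows "subset_max_rate D a = (\<Sum>U\<in>{U. U \<subseteq> A \<and> U \<noteq> {}}. Max ((\<lambda>j. a (\<pi> j) (card U - 1)) ` U))"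
proof -
  have "card (\<pi> ` U) = card U" if "U \<subseteq> A" for U
    using that assms by (auto intro: card_image inj_on_subset simp: bij_betw_def)
  then show ?thesis
    unfolding subset_max_rate_def sum_nonempty_subsets_reindex[OF assms]
    by (intro sum.cong) (auto simp: image_image)
qed

lemma order_rate_le_subset_max_rate:
  assumes "bij_betw \<pi> {1..K} D"
  shows "order_rate K a \<pi> \<le> subset_max_rate D a"
  unfolding order_rate_eq_sum_Min subset_max_rate_bij_betw[OF assms]
proof (rule sum_mono)
  fix U assume U: "U \<in> {U. U \<subseteq> {1..K} \<and> U \<noteq> {}}"
  then have "finite U"
    by (auto intro: finite_subset)
  with U have "Min U \<in> U"
    by auto
  then show "a (\<pi> (Min U)) (card U - 1) \<le> Max ((\<lambda>j. a (\<pi> j) (card U - 1)) ` U)"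
    using \<open>finite U\<close> by (intro Max_ge) auto
qed

text \<open>Level \<open>0\<close> only occurs for singletons, so monotonicity is needed only at levels \<open>1..<K\<close>.\<close>

lemma order_rate_eq_subset_max_rate:
  assumes "bij_betw \<pi> {1..K} D"
    and antimono: "\<And>i j l. i \<in> {1..K} \<Longrightarrow> j \<in> {1..K} \<Longrightarrow> i \<le> j \<Longrightarrow> l \<in> {1..<K}
                     \<Longrightarrow> a (\<pi> j) l \<le> a (\<pi> i) l"
  shows "order_rate K a \<pi> = subset_max_rate D a"
  unfolding order_rate_eq_sum_Min subset_max_rate_bij_betw[OF assms(1)]
proof (intro sum.cong refl)
  fix U assume U: "U \<in> {U. U \<subseteq> {1..K} \<and> U \<noteq> {}}"
  then have "finite U"
    by (auto intro: finite_subset)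
  with U have "Min U \<in> U"
    by auto
  show "a (\<pi> (Min U)) (card U - 1) = Max ((\<lambda>j. a (\<pi> j) (card U - 1)) ` U)"
  proof (rule sym, rule Max_eqI)
    fix y assume "y \<in> (\<lambda>j. a (\<pi> j) (card U - 1)) ` U"
    then obtain j where j: "j \<in> U" and y: "y = a (\<pi> j) (card U - 1)"
      by auto
    show "y \<le> a (\<pi> (Min U)) (card U - 1)"
    proof (cases "card U = 1")
      case True
      then show ?thesis
        using j y \<open>Min U \<in> U\<close> by (auto simp: card_1_singleton_iff)
    next
      case False
      have "card U \<le> K"
        using U card_mono[of "{1..K}" U] by auto
      then have "card U - 1 \<in> {1..<K}"
        using False \<open>finite U\<close> \<open>Min U \<in> U\<close> card_gt_0_iff[of U] by auto
      moreover have "Min U \<le> j"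
        using \<open>finite U\<close> j by simp
      moreover have "Min U \<in> {1..K}" and "j \<in> {1..K}"
        using U j \<open>Min U \<in> U\<close> by blast+
      ultimately show ?thesis
        using y antimono by blast
    qed
  qed (use \<open>finite U\<close> \<open>Min U \<in> U\<close> in auto)
qed

lemma popularity_first_antimono:
  assumes "popularity_first N K a" and "l \<in> {1..K}" and "1 \<le> m" and "m \<le> n" and "n \<le> N"
  shows "a n l \<le> a m l"
  using assms(4,5)
proof (induction n rule: dec_induct)
  case (step n)
  then have "a (n + 1) l \<le> a n l"
    using assms(1-3) unfolding popularity_first_def by auto
  with step show ?case
    by simp
qed simp

lemma ex_mono_enumeration:
  fixes D :: "'a::wellorder set"
  assumes "finite D"
  obtains \<pi> where "\<pi> \<in> {1..card D} \<rightarrow>\<^sub>E D" and "bij_betw \<pi> {1..card D} D"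
    and "\<And>i j. i \<in> {1..card D} \<Longrightarrow> j \<in> {1..card D} \<Longrightarrow> i \<le> j \<Longrightarrow> \<pi> i \<le> \<pi> j"
proof -
  obtain h where h: "bij_betw h {..<card D} D" and mono: "strict_mono_on {..<card D} h"
    using ex_bij_betw_strict_mono_card[OF assms] .
  define \<pi> where "\<pi> = restrict (\<lambda>i. h (i - 1)) {1..card D}"
  have "bij_betw (\<lambda>i. i - 1) {1..card D} {..<card D}"
    by (rule bij_betw_byWitness[where f' = Suc]) auto
  then have "bij_betw (\<lambda>i. h (i - 1)) {1..card D} D"
    using h by (auto dest: bij_betw_trans simp: comp_def)
  then have "bij_betw \<pi> {1..card D} D"
    unfolding \<pi>_def by (rule bij_betw_cong[THEN iffD1, rotated]) simp
  moreover from this have "\<pi> \<in> {1..card D} \<rightarrow>\<^sub>E D"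
    unfolding \<pi>_def by (auto simp: bij_betw_def)
  moreover have "\<pi> i \<le> \<pi> j" if "i \<in> {1..card D}" "j \<in> {1..card D}" "i \<le> j" for i j
    using that strict_mono_on_leD[OF mono, of "i - 1" "j - 1"] unfolding \<pi>_def by auto
  ultimately show ?thesis
    using that by blast
qed

lemma R_lb_eq_subset_max_rate:
  assumes pf: "popularity_first N K a" and D: "D \<subseteq> {1..N}" and card_D: "card D = K"
  shows "R_lb K D a = subset_max_rate D a"
proof -
  let ?P = "{\<pi> \<in> {1..K} \<rightarrow>\<^sub>E D. bij_betw \<pi> {1..K} D}"
  have "finite D"
    using D by (rule finite_subset) simp
  obtain \<sigma> where \<sigma>_PiE: "\<sigma> \<in> {1..K} \<rightarrow>\<^sub>E D" and \<sigma>_bij: "bij_betw \<sigma> {1..K} D"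
    and \<sigma>_mono: "\<And>i j. i \<in> {1..K} \<Longrightarrow> j \<in> {1..K} \<Longrightarrow> i \<le> j \<Longrightarrow> \<sigma> i \<le> \<sigma> j"
    using ex_mono_enumeration[OF \<open>finite D\<close>, unfolded card_D] by metis
  then have \<sigma>: "\<sigma> \<in> ?P"
    by simp
  have "order_rate K a \<sigma> = subset_max_rate D a"
  proof (rule order_rate_eq_subset_max_rate[OF \<sigma>_bij])
    fix i j l assume "i \<in> {1..K}" "j \<in> {1..K}" "i \<le> j" "l \<in> {1..<K}"
    moreover have "\<sigma> i \<in> {1..N}" and "\<sigma> j \<in> {1..N}"
      using PiE_mem[OF \<sigma>_PiE \<open>i \<in> {1..K}\<close>] PiE_mem[OF \<sigma>_PiE \<open>j \<in> {1..K}\<close>] D by blast+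
    ultimately show "a (\<sigma> j) l \<le> a (\<sigma> i) l"
      using popularity_first_antimono[OF pf, of l "\<sigma> i" "\<sigma> j"] \<sigma>_mono by auto
  qed
  moreover have "finite ?P"
    using \<open>finite D\<close> by (simp add: finite_PiE)
  ultimately have "Max (order_rate K a ` ?P) = subset_max_rate D a"
    using \<sigma> by (intro Max_eqI) (auto intro: order_rate_le_subset_max_rate rev_image_eqI)
  then show ?thesis
    unfolding R_lb_def order_rate_def card_D .
qed

lemma leaders_inj_on:
  assumes "inj_on d {1..K}"
  shows "leaders K d = {1..K}"
  using assms unfolding leaders_def by (auto dest: inj_onD)

lemma R_MCCS_inj_on:
  assumes "inj_on d {1..K}"
  shows "R_MCCS K d a = subset_max_rate (d ` {1..K}) a"
proof -
  have "{S. S \<subseteq> {1..K} \<and> S \<noteq> {} \<and> S \<inter> leaders K d \<noteq> {}} = {U. U \<subseteq> {1..K} \<and> U \<noteq> {}}"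
    using leaders_inj_on[OF assms] by auto
  moreover have "bij_betw d {1..K} (d ` {1..K})"
    using assms by (rule inj_on_imp_bij_betw)
  ultimately show ?thesis
    unfolding R_MCCS_def by (simp add: subset_max_rate_bij_betw)
qed

lemma R_MCCS_eq_R_lb:
  assumes "popularity_first N K a" and "d \<in> demands_distinct N K"
  shows "R_MCCS K d a = R_lb K (distinct_files K d) a"
proof -
  have d: "d ` {1..K} \<subseteq> {1..N}" and card_d: "card (d ` {1..K}) = K"
    using assms(2) unfolding demands_distinct_def by auto
  then have "inj_on d {1..K}"
    by (intro eq_card_imp_inj_on) auto
  then have "R_MCCS K d a = subset_max_rate (d ` {1..K}) a"
    by (rule R_MCCS_inj_on)
  also have "\<dots> = R_lb K (distinct_files K d) a"
    unfolding distinct_files_def by (rule R_lb_eq_subset_max_rate[OF assms(1) d card_d, symmetric])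
  finally show ?thesis .
qed

theorem theorem3:
  fixes N K :: nat and M :: real and p :: "nat \<Rightarrow> real"
  assumes "3 \<le> K" and "K \<le> N"
    and "0 \<le> M" and "M \<le> real N"
    and "\<forall>n\<in>{1..N}. p n > 0"
    and "(\<Sum>n=1..N. p n) = 1"
    and "\<forall>n\<in>{1..N-1}. p n \<ge> p (n+1)"
  shows "(\<forall>a. popularity_first N K a \<longrightarrow>
            (\<forall>d\<in>demands_distinct N K. R_MCCS K d a = R_lb K (distinct_files K d) a))
       \<and> (INF a\<in>{a. feasible N K M a \<and> popularity_first N K a}.
            \<Sum>d\<in>demands_distinct N K. demand_prob K p d / Z_norm N K p * R_MCCS K d a)
       = (INF a\<in>{a. feasible N K M a \<and> popularity_first N K a}.
            \<Sum>d\<in>demands_distinct N K. demand_prob K p d / Z_norm N K p * R_lb K (distinct_files K d) a)"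
proof
  show "\<forall>a. popularity_first N K a \<longrightarrow>
          (\<forall>d\<in>demands_distinct N K. R_MCCS K d a = R_lb K (distinct_files K d) a)"
    using R_MCCS_eq_R_lb by blast
  then show "(INF a\<in>{a. feasible N K M a \<and> popularity_first N K a}.
            \<Sum>d\<in>demands_distinct N K. demand_prob K p d / Z_norm N K p * R_MCCS K d a)
       = (INF a\<in>{a. feasible N K M a \<and> popularity_first N K a}.
            \<Sum>d\<in>demands_distinct N K. demand_prob K p d / Z_norm N K p * R_lb K (distinct_files K d) a)"
    by (intro INF_cong sum.cong refl) simp_all
qed

end
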